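(* Under the hypotheses of Theorem 1 (DGD$^t$ from $\mathbf{x}_0=0$, convex $f_i$ with $L_i$-Lipschitz gradients attaining their minima, $h=\sum_if_i$ $\mu_h$-strongly convex with minimizer $x^\star$, $0<\alpha\le\min\{(1+\lambda_n(\mathbf{W}^t))/L,\,c_4\}$), with $\alpha c_2<1$, $\delta=\frac{c_2}{2(1-\alpha c_2)}$, $c_1=\sqrt{1-\alpha c_2/2}$ and $c_3=\sqrt{\alpha^3(\alpha+\delta^{-1})}\,LD$, for all $k=0,1,2,\ldots$ and $1\le i\le n$: $$\|x_{i,k}-x^\star\|\le c_1^k\|x^\star\|+\frac{c_3}{\sqrt{1-c_1^2}\,(1-\beta^t)}+\frac{\alpha D}{1-\beta^t}.$$
   Context: Notation as in Theorem 1: $L=\max_iL_i$, $\mu_{\bar f}=\mu_h/n$, $L_{\bar f}=\frac1n\sum_iL_i$, $c_2=\frac{2\mu_{\bar f}L_{\bar f}}{\mu_{\bar f}+L_{\bar f}}$, $c_4=\frac{2}{\mu_{\bar f}+L_{\bar f}}$, $D=\sqrt{2L\sum_i(f_i(0)-\min f_i)}$. $\mathbf{W}$ is a symmetric doubly-stochastic matrix of a connected network ($w_{ii}>0$, $w_{ij}>0$ iff neighbours), simple eigenvalue $1$, other eigenvalues in $(-1,1)$, $\beta\in(0,1)$ its second largest eigenvalue magnitude, $\lambda_n(\mathbf{W}^t)$ the smallest eigenvalue of $\mathbf{W}^t$. DGD$^t$: $\mathbf{x}_{k+1}=(\mathbf{W}^t\otimes I_p)\mathbf{x}_k-\alpha\nabla\mathbf{f}(\mathbf{x}_k)$,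 $\nabla\mathbf{f}(\mathbf{x})=(\nabla f_1(x_1);\ldots;\nabla f_n(x_n))$, $x_{i,k}$ the $i$-th block of $\mathbf{x}_k$. *)

theory Defs
  imports "HOL-Analysis.Analysis"
begin

fun matpow :: "real^'n^'n \<Rightarrow> nat \<Rightarrow> real^'n^'n" where
  "matpow A 0 = mat 1"
| "matpow A (Suc t) = A ** matpow A t"

definition mat_eigenvalue :: "real^'n^'n \<Rightarrow> real \<Rightarrow> bool" where
  "mat_eigenvalue A l \<longleftrightarrow> (\<exists>v. v \<noteq> 0 \<and> A *v v = l *\<^sub>R v)"

definition lambda_min :: "real^'n^'n \<Rightarrow> real" where
  "lambda_min A = Min {l. mat_eigenvalue A l}"

definition second_eig_mag :: "real^'n^'n \<Rightarrow> real" where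
  "second_eig_mag W = Max {\<bar>l\<bar> | l. mat_eigenvalue W l \<and> l \<noteq> 1}"

definition strongly_convex :: "real \<Rightarrow> ('a::real_inner \<Rightarrow> real) \<Rightarrow> bool" where
  "strongly_convex mu h \<longleftrightarrow> convex_on UNIV (\<lambda>x. h x - (mu / 2) * (norm x)\<^sup>2)"

(* DGD^t iterates: x_{k+1} = (W^t \<otimes> I_p) x_k - alpha grad f(x_k), x_0 = 0 *)
fun dgd :: "real^'n^'n \<Rightarrow> nat \<Rightarrow> real \<Rightarrow> ('n \<Rightarrow> 'a::real_vector \<Rightarrow> 'a) \<Rightarrow> nat \<Rightarrow> 'n::finite \<Rightarrow> 'a"
  where
  "dgd W t alpha g 0 = (\<lambda>i. 0)"
| "dgd W t alpha g (Suc k) =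
     (\<lambda>i. (\<Sum>j\<in>UNIV. (matpow W t $ i $ j) *\<^sub>R dgd W t alpha g k j) - alpha *\<^sub>R g i (dgd W t alpha g k i))"

end

theory Submission
  imports Defs
begin

text \<open>
  DGD^t is gradient descent with unit step on the Lyapunov function
  x \<mapsto> x'(I - W^t)x/2 + alpha \<Sum>_i f_i(x_i); the step size condition alpha L \<le> 1 + \<lambda>_n(W^t)
  makes it decrease, so \<Sum>_i f_i(x_i,k) never exceeds \<Sum>_i f_i(0) and all local gradients stay
  bounded by D. On vectors with zero sum, W^t contracts by \<beta>^t, which keeps every iterate
  within alpha D/(1 - \<beta>^t) of the network average. The average itself runs gradient descent on
  h/n with a gradient error of at most L alpha D/(1 - \<beta>^t); strong convexity makes the exact
  step a contraction by 1 - alpha c_2, and a weighted triangle inequality absorbs the error.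
\<close>


section \<open>Smooth and strongly convex functions\<close>

lemma lipschitz_gradient_upper_bound:
  fixes f :: "'v::real_inner \<Rightarrow> real" and g :: "'v \<Rightarrow> 'v"
  assumes der: "\<And>x. (f has_derivative (\<lambda>y. g x \<bullet> y)) (at x)"
    and lip: "\<And>x y. norm (g x - g y) \<le> L * norm (x - y)"
  shows "f y \<le> f x + g x \<bullet> (y - x) + L/2 * (norm (y - x))\<^sup>2"
proof -
  define d where "d = y - x"
  define \<phi> where "\<phi> s = f (x + s *\<^sub>R d) - s * (g x \<bullet> d) - L/2 * s\<^sup>2 * (norm d)\<^sup>2" for s
  have \<phi>_deriv: "(\<phi> has_real_derivative (g (x + s *\<^sub>R d) \<bullet> d - g x \<bullet> d - L * s * (norm d)\<^sup>2)) (at s)"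
    for s
  proof -
    have "((\<lambda>s. x + s *\<^sub>R d) has_derivative (\<lambda>h. h *\<^sub>R d)) (at s)"
      by (auto intro!: derivative_eq_intros)
    from has_derivative_compose[OF this der]
    have "((\<lambda>s. f (x + s *\<^sub>R d)) has_real_derivative (g (x + s *\<^sub>R d) \<bullet> d)) (at s)"
      unfolding has_field_derivative_def by (simp add: mult.commute[of _ "g (x + s *\<^sub>R d) \<bullet> d"])
    then show ?thesis
      unfolding \<phi>_def by (auto intro!: derivative_eq_intros simp: algebra_simps)
  qed
  have "\<phi> 1 \<le> \<phi> 0"
  proof (rule DERIV_nonpos_imp_nonincreasing[of 0 1 \<phi>])
    fix s :: real assume s: "0 \<le> s" "s \<le> 1"
    have "(g (x + s *\<^sub>R d) - g x) \<bullet> d \<le> norm (g (x + s *\<^sub>R d) - g x) * norm d"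
      by (rule norm_cauchy_schwarz)
    also have "\<dots> \<le> (L * norm (s *\<^sub>R d)) * norm d"
      using lip[of "x + s *\<^sub>R d" x] by (intro mult_right_mono) auto
    also have "\<dots> = L * s * (norm d)\<^sup>2" using s by (simp add: power2_eq_square)
    finally show "\<exists>y. DERIV \<phi> s :> y \<and> y \<le> 0"
      using \<phi>_deriv[of s] by (intro exI conjI) (auto simp: inner_diff_left)
  qed simp
  then show ?thesis unfolding \<phi>_def d_def by simp
qed

lemma gradient_norm_sq_le_gap:
  fixes f :: "'v::real_inner \<Rightarrow> real" and g :: "'v \<Rightarrow> 'v"
  assumes der: "\<And>x. (f has_derivative (\<lambda>y. g x \<bullet> y)) (at x)"
    and lip: "\<And>x y. norm (g x - g y) \<le> L * norm (x - y)"
    and L: "L > 0" and lower: "\<And>z. m \<le> f z"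
  shows "(norm (g x))\<^sup>2 \<le> 2 * L * (f x - m)"
proof -
  let ?y = "x - (1/L) *\<^sub>R g x"
  have "m \<le> f ?y" by (rule lower)
  also have "\<dots> \<le> f x + g x \<bullet> (?y - x) + L/2 * (norm (?y - x))\<^sup>2"
    by (rule lipschitz_gradient_upper_bound[OF der lip])
  also have "\<dots> = f x - (norm (g x))\<^sup>2 / (2*L)"
    using L by (simp add: power2_norm_eq_inner[symmetric] power2_eq_square field_simps)
  finally show ?thesis using L by (simp add: field_simps)
qed

lemma gradient_eq_0_at_minimum:
  fixes f :: "'v::real_inner \<Rightarrow> real"
  assumes "(f has_derivative (\<lambda>y. G \<bullet> y)) (at x)" and "\<And>z. f x \<le> f z"
  shows "G = 0"
proof -
  have "(\<lambda>y. G \<bullet> y) = (\<lambda>y. 0)"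
    using assms by (intro has_derivative_local_min) (auto intro: always_eventually)
  then show ?thesis by (metis inner_eq_zero_iff)
qed

lemma convex_on_above_gradient:
  fixes \<phi> :: "'v::real_inner \<Rightarrow> real"
  assumes cvx: "convex_on UNIV \<phi>" and der: "(\<phi> has_derivative (\<lambda>y. P \<bullet> y)) (at x)"
  shows "\<phi> x + P \<bullet> (y - x) \<le> \<phi> y"
proof -
  define d where "d = y - x"
  define \<psi> where "\<psi> s = \<phi> (x + s *\<^sub>R d)" for s :: real
  have "convex_on UNIV \<psi>"
  proof (rule convex_onI)
    fix t a b :: real assume t: "t > 0" "t < 1"
    have "x + ((1 - t) *\<^sub>R a + t *\<^sub>R b) *\<^sub>R d = (1-t) *\<^sub>R (x + a *\<^sub>R d) + t *\<^sub>R (x + b *\<^sub>R d)"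
      by (simp add: algebra_simps)
    then show "\<psi> ((1 - t) *\<^sub>R a + t *\<^sub>R b) \<le> (1 - t) * \<psi> a + t * \<psi> b"
      unfolding \<psi>_def using convex_onD[OF cvx, of t "x + a *\<^sub>R d" "x + b *\<^sub>R d"] t by simp
  qed simp
  moreover have "(\<psi> has_field_derivative (P \<bullet> d)) (at 0 within UNIV)"
  proof -
    have "((\<lambda>s. x + s *\<^sub>R d) has_derivative (\<lambda>h. h *\<^sub>R d)) (at 0)"
      by (auto intro!: derivative_eq_intros)
    moreover have "(\<phi> has_derivative (\<lambda>y. P \<bullet> y)) (at (x + 0 *\<^sub>R d))" using der by simp
    ultimately show ?thesis
      unfolding \<psi>_def has_field_derivative_def
      by (auto dest: has_derivative_compose simp: mult.commute[of _ "P \<bullet> d"])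
  qed
  ultimately have "\<psi> 1 - \<psi> 0 \<ge> (P \<bullet> d) * (1 - 0)"
    by (intro convex_on_imp_above_tangent) auto
  then show ?thesis unfolding \<psi>_def d_def by simp
qed

lemma gradient_gap_lower_bound:
  fixes \<phi> :: "'v::real_inner \<Rightarrow> real"
  assumes low: "\<And>x y. \<phi> x + P x \<bullet> (y - x) \<le> \<phi> y"
    and up: "\<And>x y. \<phi> y \<le> \<phi> x + P x \<bullet> (y - x) + K/2 * (norm (y - x))\<^sup>2"
    and K: "K > 0"
  shows "\<phi> x + P x \<bullet> (y - x) + (norm (P y - P x))\<^sup>2 / (2*K) \<le> \<phi> y"
proof -
  define D where "D = P y - P x"
  \<comment> \<open>compare both bounds at the point reached from y by a gradient step of length 1/K on P - P x\<close>
  define z where "z = y - (1/K) *\<^sub>R D"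
  have "\<phi> x + P x \<bullet> (z - x) \<le> \<phi> z" by (rule low)
  moreover have "\<phi> z \<le> \<phi> y + P y \<bullet> (z - y) + K/2 * (norm (z - y))\<^sup>2" by (rule up)
  moreover have "P x \<bullet> (z - x) = P x \<bullet> (y - x) - (1/K) * (P x \<bullet> D)"
    unfolding z_def by (simp add: inner_diff_right algebra_simps)
  moreover have "P y \<bullet> (z - y) = - (1/K) * (P y \<bullet> D)"
    unfolding z_def by (simp add: inner_diff_right algebra_simps)
  moreover have "K/2 * (norm (z - y))\<^sup>2 = (D \<bullet> D) / (2*K)"
    unfolding z_def using K by (simp add: dot_square_norm power2_eq_square field_simps)
  moreover have "(norm (P y - P x))\<^sup>2 / (2*K) = (P y \<bullet> D - P x \<bullet> D) / K - (D \<bullet> D) / (2*K)"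
    using K unfolding D_def by (simp add: power2_norm_eq_inner inner_diff_left field_simps)
  ultimately show ?thesis by (simp add: diff_divide_distrib)
qed

lemma gradient_cocoercive:
  fixes \<phi> :: "'v::real_inner \<Rightarrow> real"
  assumes low: "\<And>x y. \<phi> x + P x \<bullet> (y - x) \<le> \<phi> y"
    and up: "\<And>x y. \<phi> y \<le> \<phi> x + P x \<bullet> (y - x) + K/2 * (norm (y - x))\<^sup>2"
    and K: "K \<ge> 0"
  shows "(norm (P x - P y))\<^sup>2 \<le> K * ((P x - P y) \<bullet> (x - y))"
proof -
  define a where "a = (P x - P y) \<bullet> (x - y)"
  define b where "b = (norm (P x - P y))\<^sup>2"
  have larger: "b \<le> K' * a" if K': "K' > 0" "K' \<ge> K" for K'
  proof -
    have up': "\<phi> y \<le> \<phi> x + P x \<bullet> (y - x) + K'/2 * (norm (y - x))\<^sup>2" for x y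
      using up[where x=x and y=y] mult_right_mono[OF \<open>K' \<ge> K\<close>, of "(norm (y - x))\<^sup>2"] by simp
    have "\<phi> x + P x \<bullet> (y - x) + (norm (P y - P x))\<^sup>2 / (2*K') \<le> \<phi> y"
      and "\<phi> y + P y \<bullet> (x - y) + (norm (P x - P y))\<^sup>2 / (2*K') \<le> \<phi> x"
      by (rule gradient_gap_lower_bound[OF low up' K'(1)])+
    moreover have "P x \<bullet> (y - x) + P y \<bullet> (x - y) = - a"
      unfolding a_def by (simp add: inner_diff_left inner_diff_right algebra_simps)
    ultimately have "b / K' \<le> a"
      unfolding b_def by (simp add: norm_minus_commute field_simps)
    then show ?thesis using K' by (simp add: field_simps)
  qed
  have "b \<le> K * a + e" if "e > 0" for e
  proof -
    have "b \<le> (K + e / (\<bar>a\<bar> + 1)) * a"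
      using K that by (intro larger) (auto intro: add_nonneg_pos)
    also have "\<dots> \<le> K * a + e"
      using that by (simp add: distrib_right divide_le_eq abs_le_iff mult_left_mono)
    finally show ?thesis .
  qed
  then show ?thesis unfolding a_def b_def by (rule field_le_epsilon)
qed

lemma strongly_convex_gradient_inner_bound:
  fixes F :: "'v::euclidean_space \<Rightarrow> real" and G :: "'v \<Rightarrow> 'v"
  assumes der: "\<And>x. (F has_derivative (\<lambda>y. G x \<bullet> y)) (at x)"
    and lip: "\<And>x y. norm (G x - G y) \<le> Lf * norm (x - y)"
    and sc: "convex_on UNIV (\<lambda>x. F x - mu/2 * (norm x)\<^sup>2)"
  shows "(norm (G x - G y))\<^sup>2 + mu * Lf * (norm (x - y))\<^sup>2 \<le> (mu + Lf) * ((G x - G y) \<bullet> (x - y))"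
proof -
  \<comment> \<open>F - mu/2 |.|^2 is convex with (Lf - mu)-Lipschitz gradient P, hence P is cocoercive\<close>
  define \<phi> where "\<phi> x = F x - mu/2 * (norm x)\<^sup>2" for x
  define P where "P x = G x - mu *\<^sub>R x" for x
  have \<phi>_deriv: "(\<phi> has_derivative (\<lambda>z. P x \<bullet> z)) (at x)" for x
  proof -
    have "((\<lambda>x. F x - mu/2 * (x \<bullet> x)) has_derivative (\<lambda>z. G x \<bullet> z - mu/2 * (x \<bullet> z + z \<bullet> x))) (at x)"
      by (rule derivative_eq_intros der refl)+
    moreover have "(\<lambda>z. G x \<bullet> z - mu/2 * (x \<bullet> z + z \<bullet> x)) = (\<lambda>z. P x \<bullet> z)"
      unfolding P_def by (auto simp: inner_diff_left inner_commute algebra_simps)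
    ultimately show ?thesis unfolding \<phi>_def by (simp add: power2_norm_eq_inner)
  qed
  have low: "\<phi> x + P x \<bullet> (z - x) \<le> \<phi> z" for x z
    by (rule convex_on_above_gradient[OF sc[folded \<phi>_def] \<phi>_deriv])
  have up: "\<phi> z \<le> \<phi> x + P x \<bullet> (z - x) + (Lf - mu)/2 * (norm (z - x))\<^sup>2" for x z
  proof -
    have "F z \<le> F x + G x \<bullet> (z - x) + Lf/2 * (norm (z - x))\<^sup>2"
      by (rule lipschitz_gradient_upper_bound[OF der lip])
    then show ?thesis unfolding \<phi>_def P_def power2_norm_eq_inner
      by (simp add: inner_diff_left inner_diff_right inner_commute algebra_simps) (simp add: field_simps)
  qed
  have "Lf - mu \<ge> 0"
  proof -
    obtain b :: 'v where b: "b \<in> Basis" using nonempty_Basis by blast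
    have "0 \<le> (Lf - mu)/2 * (norm b)\<^sup>2" using low[of 0 b] up[of b 0] by simp
    then show ?thesis using b by (simp add: zero_le_mult_iff)
  qed
  from gradient_cocoercive[OF low up this]
  have "(norm (P x - P y))\<^sup>2 \<le> (Lf - mu) * ((P x - P y) \<bullet> (x - y))" .
  moreover have "P x - P y = (G x - G y) - mu *\<^sub>R (x - y)" unfolding P_def by (simp add: algebra_simps)
  ultimately show ?thesis unfolding power2_norm_eq_inner
    by (simp add: inner_diff_left inner_diff_right inner_commute power2_eq_square algebra_simps)
qed

lemma gradient_step_contraction:
  fixes F :: "'v::euclidean_space \<Rightarrow> real" and G :: "'v \<Rightarrow> 'v"
  assumes der: "\<And>x. (F has_derivative (\<lambda>y. G x \<bullet> y)) (at x)"
    and lip: "\<And>x y. norm (G x - G y) \<le> Lf * norm (x - y)"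
    and sc: "convex_on UNIV (\<lambda>x. F x - mu/2 * (norm x)\<^sup>2)"
    and mu: "mu > 0" and Lf: "Lf > 0" and crit: "G xs = 0"
    and alpha: "alpha > 0" "alpha \<le> 2 / (mu + Lf)"
  shows "(norm (y - alpha *\<^sub>R G y - xs))\<^sup>2 \<le> (1 - alpha * (2 * mu * Lf / (mu + Lf))) * (norm (y - xs))\<^sup>2"
proof -
  define p where "p = G y \<bullet> (y - xs)"
  define q where "q = G y \<bullet> G y"
  define w where "w = (y - xs) \<bullet> (y - xs)"
  have S: "mu + Lf > 0" using mu Lf by simp
  have "q + mu * Lf * w \<le> (mu + Lf) * p"
    using strongly_convex_gradient_inner_bound[OF der lip sc, of y xs]
    unfolding p_def q_def w_def crit power2_norm_eq_inner by simp
  then have "(q + mu * Lf * w) / (mu + Lf) \<le> p"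
    using S by (simp add: pos_divide_le_eq mult.commute)
  then have "2 * alpha * ((q + mu * Lf * w) / (mu + Lf)) \<le> 2 * alpha * p"
    using alpha by (intro mult_left_mono) auto
  moreover have "alpha * alpha * q \<le> alpha * (2 / (mu + Lf)) * q"
    unfolding q_def using alpha by (intro mult_right_mono mult_left_mono) auto
  moreover have "(norm (y - alpha *\<^sub>R G y - xs))\<^sup>2 = w - 2 * alpha * p + alpha * alpha * q"
    unfolding power2_norm_eq_inner p_def q_def w_def
    by (simp add: inner_diff_left inner_diff_right inner_commute algebra_simps)
  ultimately have "(norm (y - alpha *\<^sub>R G y - xs))\<^sup>2
      \<le> w - 2 * alpha * ((q + mu * Lf * w) / (mu + Lf)) + alpha * (2 / (mu + Lf)) * q"
    by (metis add_mono diff_left_mono)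
  also have "\<dots> = (1 - alpha * (2 * mu * Lf / (mu + Lf))) * w"
    using S by (simp add: diff_divide_distrib add_divide_distrib algebra_simps)
  finally show ?thesis unfolding w_def power2_norm_eq_inner .
qed

section \<open>Gradient descent with bounded gradient errors\<close>

lemma norm_add_sq_le_weighted:
  fixes a b :: "'v::real_inner"
  assumes e: "e > 0"
  shows "(norm (a + b))\<^sup>2 \<le> (1 + e) * (norm a)\<^sup>2 + (1 + 1/e) * (norm b)\<^sup>2"
proof -
  have "2 * (a \<bullet> b) \<le> 2 * (norm a * norm b)" using norm_cauchy_schwarz[of a b] by simp
  also have "\<dots> \<le> e * (norm a)\<^sup>2 + (norm b)\<^sup>2 / e"
  proof -
    have "0 \<le> (e * norm a - norm b)\<^sup>2" by simp
    then show ?thesis using e by (simp add: field_simps power2_eq_square)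
  qed
  finally show ?thesis
    by (simp add: power2_norm_eq_inner inner_add_left inner_add_right inner_commute algebra_simps)
qed

lemma affine_recursion_step:
  fixes c s E P r r' :: real
  assumes c: "0 \<le> c" "c \<le> 1" and s: "s > 0" "s\<^sup>2 = 1 - c\<^sup>2" and E: "E \<ge> 0" and P: "P \<ge> 0"
    and r: "0 \<le> r" "r \<le> P + E/s" and r': "r'\<^sup>2 \<le> c\<^sup>2 * r\<^sup>2 + E\<^sup>2"
  shows "r' \<le> c * P + E/s"
proof -
  have "r'\<^sup>2 \<le> c\<^sup>2 * (P + E/s)\<^sup>2 + E\<^sup>2"
    using r r' by (smt (verit) mult_left_mono power_mono zero_le_power2)
  also have "\<dots> = (c * P + E/s)\<^sup>2 - 2 * c * P * E * (1 - c) / s + E\<^sup>2 * (s\<^sup>2 + c\<^sup>2 - 1) / s\<^sup>2"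
    using s(1) by (simp add: field_simps power2_eq_square)
  also have "\<dots> = (c * P + E/s)\<^sup>2 - 2 * c * P * E * (1 - c) / s"
    using s(2) by simp
  also have "\<dots> \<le> (c * P + E/s)\<^sup>2" using c s E P by simp
  finally show ?thesis by (rule power2_le_imp_le) (use c s E P in simp)
qed

lemma inexact_gradient_descent_bound:
  fixes x e :: "nat \<Rightarrow> 'v::real_inner" and G :: "'v \<Rightarrow> 'v"
  assumes contraction: "\<And>y. (norm (y - alpha *\<^sub>R G y - xs))\<^sup>2 \<le> (1 - alpha * c) * (norm (y - xs))\<^sup>2"
    and alpha: "alpha > 0" and c: "c > 0" "alpha * c < 1"
    and step: "\<And>k. x (Suc k) = x k - alpha *\<^sub>R (G (x k) + e k)"
    and err: "\<And>k. norm (e k) \<le> eps"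
  defines "delta \<equiv> c / (2 * (1 - alpha * c))" and "c1 \<equiv> sqrt (1 - alpha * c / 2)"
  shows "norm (x k - xs)
    \<le> c1 ^ k * norm (x 0 - xs) + sqrt (alpha * (alpha + 1 / delta)) * eps / sqrt (1 - c1\<^sup>2)"
proof -
  define E where "E = sqrt (alpha * (alpha + 1 / delta)) * eps"
  define s where "s = sqrt (1 - c1\<^sup>2)"
  have delta: "delta > 0" unfolding delta_def using c by simp
  have c1_sq: "c1\<^sup>2 = 1 - alpha * c / 2" unfolding c1_def using c by simp
  have c1: "0 \<le> c1" "c1 \<le> 1" unfolding c1_def using alpha c by auto
  have s: "s > 0" "s\<^sup>2 = 1 - c1\<^sup>2" unfolding s_def c1_sq using alpha c by auto
  have eps: "eps \<ge> 0" using err[of 0] norm_ge_zero order_trans by blast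
  have E: "E \<ge> 0" "E\<^sup>2 = alpha * (alpha + 1 / delta) * eps\<^sup>2"
    unfolding E_def using alpha delta eps by (auto simp: power_mult_distrib)
  \<comment> \<open>the weight alpha delta in the weighted triangle inequality is chosen so that
      (1 + alpha delta)(1 - alpha c) = c1^2\<close>
  have weight: "(1 + alpha * delta) * (1 - alpha * c) = c1\<^sup>2"
    unfolding c1_sq delta_def using c by (simp add: field_simps)
  have one_step: "(norm (x (Suc k) - xs))\<^sup>2 \<le> c1\<^sup>2 * (norm (x k - xs))\<^sup>2 + E\<^sup>2" for k
  proof -
    have ad: "alpha * delta > 0" using alpha delta by simp
    have split: "x (Suc k) - xs = (x k - alpha *\<^sub>R G (x k) - xs) + (- alpha *\<^sub>R e k)"
      unfolding step by (simp add: algebra_simps)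
    have "(norm (x (Suc k) - xs))\<^sup>2
        \<le> (1 + alpha * delta) * (norm (x k - alpha *\<^sub>R G (x k) - xs))\<^sup>2
          + (1 + 1 / (alpha * delta)) * (norm (- alpha *\<^sub>R e k))\<^sup>2"
      unfolding split by (rule norm_add_sq_le_weighted[OF ad])
    also have "(1 + alpha * delta) * (norm (x k - alpha *\<^sub>R G (x k) - xs))\<^sup>2
        \<le> c1\<^sup>2 * (norm (x k - xs))\<^sup>2"
      using mult_left_mono[OF contraction[of "x k"], of "1 + alpha * delta"] ad
      unfolding weight[symmetric] by (simp add: mult.assoc)
    also have "(1 + 1 / (alpha * delta)) * (norm (- alpha *\<^sub>R e k))\<^sup>2
        = alpha * (alpha + 1 / delta) * (norm (e k))\<^sup>2"
      using alpha delta by (simp add: power_mult_distrib field_simps power2_eq_square)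
    also have "\<dots> \<le> E\<^sup>2"
      unfolding E(2) using alpha delta err[of k]
      by (intro mult_left_mono power_mono) auto
    finally show ?thesis by simp
  qed
  have "norm (x k - xs) \<le> c1 ^ k * norm (x 0 - xs) + E / s"
  proof (induction k)
    case (Suc k)
    have "norm (x (Suc k) - xs) \<le> c1 * (c1 ^ k * norm (x 0 - xs)) + E / s"
      by (rule affine_recursion_step[OF c1 s E(1) _ _ Suc one_step]) (use c1 in simp_all)
    then show ?case by (simp add: mult.assoc)
  qed (use E s in simp)
  then show ?thesis unfolding E_def s_def .
qed

section \<open>Rayleigh quotients and symmetric matrices\<close>

lemma rayleigh_quotient_attains_max:
  fixes T :: "'v::euclidean_space \<Rightarrow> 'v"
  assumes lin: "linear T" and S: "subspace S" and ne: "x0 \<in> S" "x0 \<noteq> 0"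
  shows "\<exists>v\<in>S. norm v = 1 \<and> (\<forall>x\<in>S. x \<bullet> T x \<le> (v \<bullet> T v) * (norm x)\<^sup>2)"
proof -
  define K where "K = S \<inter> sphere 0 1"
  have K: "compact K" unfolding K_def
    by (rule closed_Int_compact[OF closed_subspace[OF S] compact_sphere])
  have "(1 / norm x0) *\<^sub>R x0 \<in> K" using ne S unfolding K_def by (auto simp: subspace_scale)
  then have K_ne: "K \<noteq> {}" by auto
  have "bounded_linear T" using lin by (simp add: linear_conv_bounded_linear)
  then have cont: "continuous_on K (\<lambda>x. x \<bullet> T x)"
    by (intro continuous_intros linear_continuous_on)
  obtain v where v: "v \<in> K" and vmax: "\<And>y. y \<in> K \<Longrightarrow> y \<bullet> T y \<le> v \<bullet> T v"
    using continuous_attains_sup[OF K K_ne cont] by blast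
  have "x \<bullet> T x \<le> (v \<bullet> T v) * (norm x)\<^sup>2" if "x \<in> S" for x
  proof (cases "x = 0")
    case True then show ?thesis by (simp add: linear_0[OF lin])
  next
    case False
    define y where "y = (1 / norm x) *\<^sub>R x"
    have "y \<in> K" using that False S unfolding K_def y_def by (auto simp: subspace_scale)
    then have "y \<bullet> T y \<le> v \<bullet> T v" by (rule vmax)
    moreover have "y \<bullet> T y = (x \<bullet> T x) / (norm x)\<^sup>2"
      unfolding y_def linear_scale[OF lin] by (simp add: power2_eq_square)
    ultimately show ?thesis using False by (simp add: field_simps)
  qed
  moreover have "v \<in> S" "norm v = 1" using v unfolding K_def by auto
  ultimately show ?thesis by blast
qed

lemma rayleigh_maximizer_eigenvector:
  fixes T :: "'v::real_inner \<Rightarrow> 'v"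
  assumes lin: "linear T" and sa: "\<And>x y. x \<bullet> T y = T x \<bullet> y" and S: "subspace S"
    and inv: "\<And>x. x \<in> S \<Longrightarrow> T x \<in> S" and v: "v \<in> S" "norm v = 1"
    and max: "\<And>x. x \<in> S \<Longrightarrow> x \<bullet> T x \<le> (v \<bullet> T v) * (norm x)\<^sup>2"
  shows "T v = (v \<bullet> T v) *\<^sub>R v"
proof -
  define M where "M = v \<bullet> T v"
  define w where "w = T v - M *\<^sub>R v"
  define a where "a = w \<bullet> w"
  define k where "k = M * a - w \<bullet> T w"
  have vv: "v \<bullet> v = 1" using v(2) by (simp add: norm_eq_sqrt_inner)
  have wS: "w \<in> S" unfolding w_def using v inv S by (simp add: subspace_diff subspace_scale)
  have wv: "w \<bullet> v = 0" unfolding w_def M_def using vv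
    by (simp add: inner_diff_left inner_diff_right inner_commute)
  have "T v = w + M *\<^sub>R v" unfolding w_def by simp
  then have wTv: "w \<bullet> T v = a" unfolding a_def using wv by (simp add: inner_add_right)
  \<comment> \<open>w is orthogonal to v, so maximality at v in the direction w forces w = 0\<close>
  have perturb: "2 * a \<le> e * k" if e: "e > 0" for e
  proof -
    define z where "z = v + e *\<^sub>R w"
    have "z \<in> S" unfolding z_def using v(1) wS S by (simp add: subspace_add subspace_scale)
    then have "z \<bullet> T z \<le> M * (norm z)\<^sup>2" unfolding M_def by (rule max)
    moreover have "z \<bullet> T z = M + 2 * e * a + e\<^sup>2 * (w \<bullet> T w)"
    proof -
      have "v \<bullet> T w = w \<bullet> T v" using sa[of v w] by (simp add: inner_commute)
      then show ?thesis unfolding z_def linear_add[OF lin] linear_scale[OF lin] M_def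
        using wTv by (simp add: inner_add_left inner_add_right power2_eq_square algebra_simps)
    qed
    moreover have "(norm z)\<^sup>2 = 1 + e\<^sup>2 * a"
      unfolding z_def power2_norm_eq_inner a_def using vv wv
      by (simp add: inner_add_left inner_add_right inner_commute power2_eq_square algebra_simps)
    ultimately have "e * (2 * a) \<le> e * (e * k)"
      unfolding k_def by (simp add: power2_eq_square algebra_simps)
    then show ?thesis using e by simp
  qed
  have "a \<le> 0"
  proof (rule ccontr)
    assume "\<not> a \<le> 0"
    then have ap: "a > 0" by simp
    have "2 * a \<le> (a / (\<bar>k\<bar> + 1)) * k" using perturb[of "a / (\<bar>k\<bar> + 1)"] ap by simp
    also have "\<dots> \<le> (a / (\<bar>k\<bar> + 1)) * \<bar>k\<bar>" using ap by (intro mult_left_mono) auto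
    also have "\<dots> < a" using ap by (simp add: field_simps)
    finally show False using ap by simp
  qed
  then have "w = 0" unfolding a_def using inner_ge_zero[of w] by (simp add: order_antisym)
  then show ?thesis unfolding w_def M_def by simp
qed

lemma self_adjoint_rayleigh_max:
  fixes T :: "'v::euclidean_space \<Rightarrow> 'v"
  assumes lin: "linear T" and sa: "\<And>x y. x \<bullet> T y = T x \<bullet> y" and S: "subspace S"
    and inv: "\<And>x. x \<in> S \<Longrightarrow> T x \<in> S" and ne: "x0 \<in> S" "x0 \<noteq> 0"
  shows "\<exists>v\<in>S. norm v = 1 \<and> T v = (v \<bullet> T v) *\<^sub>R v \<and> (\<forall>x\<in>S. x \<bullet> T x \<le> (v \<bullet> T v) * (norm x)\<^sup>2)"
proof -
  obtain v where v: "v \<in> S" "norm v = 1" and max: "\<forall>x\<in>S. x \<bullet> T x \<le> (v \<bullet> T v) * (norm x)\<^sup>2"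
    using rayleigh_quotient_attains_max[OF lin S ne] by blast
  moreover have "T v = (v \<bullet> T v) *\<^sub>R v"
    using max by (intro rayleigh_maximizer_eigenvector[OF lin sa S inv v]) auto
  ultimately show ?thesis by blast
qed

lemma symmetric_entry: "transpose A = A \<Longrightarrow> A$i$j = A$j$i"
  by (metis transpose_def vec_lambda_beta)

lemma inner_matrix_vector_symmetric:
  fixes A :: "real^'n^'n"
  assumes "transpose A = A"
  shows "x \<bullet> (A *v y) = (A *v x) \<bullet> y"
proof -
  have "x \<bullet> (A *v y) = (\<Sum>i\<in>UNIV. \<Sum>j\<in>UNIV. A$i$j * x$i * y$j)"
    by (simp add: inner_vec_def matrix_vector_mult_def sum_distrib_left algebra_simps)
  also have "\<dots> = (\<Sum>j\<in>UNIV. \<Sum>i\<in>UNIV. A$i$j * x$i * y$j)" by (rule sum.swap)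
  also have "\<dots> = (A *v x) \<bullet> y"
  proof -
    have r: "(A *v x) $ j = (\<Sum>i\<in>UNIV. A$i$j * x$i)" for j
      by (auto intro!: sum.cong simp: matrix_vector_mult_def symmetric_entry[OF assms, of j])
    show ?thesis by (simp add: inner_vec_def r sum_distrib_left algebra_simps)
  qed
  finally show ?thesis .
qed

lemma finite_mat_eigenvalues:
  fixes A :: "real^'n^'n"
  assumes sym: "transpose A = A"
  shows "finite {l. mat_eigenvalue A l}"
proof -
  define E where "E = {l. mat_eigenvalue A l}"
  define ev where "ev l = (SOME v. v \<noteq> 0 \<and> A *v v = l *\<^sub>R v)" for l
  have ev: "ev l \<noteq> 0 \<and> A *v ev l = l *\<^sub>R ev l" if "l \<in> E" for l
  proof -
    from that have "\<exists>v. v \<noteq> 0 \<and> A *v v = l *\<^sub>R v" unfolding E_def mat_eigenvalue_def by simp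
    then show ?thesis unfolding ev_def by (rule someI_ex)
  qed
  have inj: "inj_on ev E"
  proof (rule inj_onI)
    fix l m assume lm: "l \<in> E" "m \<in> E" "ev l = ev m"
    have "l *\<^sub>R ev l = A *v ev l" using ev[OF lm(1)] by simp
    also have "\<dots> = A *v ev m" using lm(3) by simp
    also have "\<dots> = m *\<^sub>R ev m" using ev[OF lm(2)] by simp
    also have "\<dots> = m *\<^sub>R ev l" using lm(3) by simp
    finally have "l *\<^sub>R ev l = m *\<^sub>R ev l" .
    then show "l = m" using ev[OF lm(1)] by (simp add: scaleR_cancel_right)
  qed
  have orth: "pairwise orthogonal (ev ` E)"
  proof (rule pairwiseI)
    fix u w assume "u \<in> ev ` E" "w \<in> ev ` E" "u \<noteq> w"
    then obtain l m where lm: "l \<in> E" "m \<in> E" "u = ev l" "w = ev m" "l \<noteq> m" by auto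
    have "l * (u \<bullet> w) = (A *v u) \<bullet> w" using ev[OF lm(1)] lm by simp
    also have "\<dots> = u \<bullet> (A *v w)" using inner_matrix_vector_symmetric[OF sym] by simp
    also have "\<dots> = m * (u \<bullet> w)" using ev[OF lm(2)] lm by simp
    finally have "(l - m) * (u \<bullet> w) = 0" by (simp add: algebra_simps)
    then show "orthogonal u w" using lm by (simp add: orthogonal_def)
  qed
  have "0 \<notin> ev ` E" using ev by auto
  then have "independent (ev ` E)" using pairwise_orthogonal_independent orth by blast
  then have "finite (ev ` E)" by (rule finiteI_independent)
  then show ?thesis using finite_imageD inj unfolding E_def by blast
qed

lemma matpow_commute: "matpow A t ** A = A ** matpow A t"
proof (induction t)
  case (Suc t)
  have "matpow A (Suc t) ** A = A ** (matpow A t ** A)" by (simp add: matrix_mul_assoc[symmetric])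
  also have "\<dots> = A ** matpow A (Suc t)" using Suc by simp
  finally show ?case .
qed simp

lemma transpose_matpow: "transpose A = A \<Longrightarrow> transpose (matpow A t) = matpow A t"
  by (induction t) (simp_all add: matrix_transpose_mul matpow_commute)

section \<open>The action of a mixing matrix on stacked vectors\<close>

text \<open>A stacked vector x = (x_1; ...; x_n) is an element of 'a^'n with blocks x$i, and
  kron_mult A x is (A \<otimes> I) x.\<close>

definition kron_mult :: "real^'n^'n \<Rightarrow> ('a::real_vector)^'n \<Rightarrow> 'a^'n" where
  "kron_mult A x = (\<chi> i. \<Sum>j\<in>UNIV. (A$i$j) *\<^sub>R x$j)"

lemma kron_mult_nth: "kron_mult A x $ i = (\<Sum>j\<in>UNIV. (A$i$j) *\<^sub>R x$j)"
  by (simp add: kron_mult_def)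

lemma kron_mult_add: "kron_mult A (x + y) = kron_mult A x + kron_mult A y"
  by (simp add: vec_eq_iff kron_mult_nth scaleR_add_right sum.distrib)

lemma kron_mult_diff: "kron_mult A (x - y) = kron_mult A x - kron_mult A y"
  by (simp add: vec_eq_iff kron_mult_nth scaleR_diff_right sum_subtractf)

lemma kron_mult_scaleR: "kron_mult A (c *\<^sub>R x) = c *\<^sub>R kron_mult A x"
  by (simp add: vec_eq_iff kron_mult_nth scaleR_sum_right mult.commute)

lemma kron_mult_0: "kron_mult A 0 = 0"
  by (simp add: vec_eq_iff kron_mult_nth)

lemma inner_kron_mult_symmetric:
  fixes x y :: "'a::real_inner^'n"
  assumes "transpose A = A"
  shows "x \<bullet> kron_mult A y = kron_mult A x \<bullet> y"
proof -
  have "x \<bullet> kron_mult A y = (\<Sum>i\<in>UNIV. \<Sum>j\<in>UNIV. A$i$j * (x$i \<bullet> y$j))"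
    by (simp add: inner_vec_def kron_mult_nth inner_sum_right)
  also have "\<dots> = (\<Sum>j\<in>UNIV. \<Sum>i\<in>UNIV. A$i$j * (x$i \<bullet> y$j))" by (rule sum.swap)
  also have "\<dots> = kron_mult A x \<bullet> y"
    by (simp add: inner_vec_def kron_mult_nth inner_sum_left symmetric_entry[OF assms, of _ j for j])
  finally show ?thesis .
qed

lemma kron_mult_matrix_mult: "kron_mult (A ** B) x = kron_mult A (kron_mult B x)"
proof -
  have "kron_mult (A ** B) x $ i = kron_mult A (kron_mult B x) $ i" for i
  proof -
    have "kron_mult (A ** B) x $ i = (\<Sum>j\<in>UNIV. \<Sum>k\<in>UNIV. (A$i$k * B$k$j) *\<^sub>R x$j)"
      by (simp add: kron_mult_nth matrix_matrix_mult_def scaleR_sum_left)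
    also have "\<dots> = (\<Sum>k\<in>UNIV. \<Sum>j\<in>UNIV. (A$i$k * B$k$j) *\<^sub>R x$j)" by (rule sum.swap)
    also have "\<dots> = kron_mult A (kron_mult B x) $ i"
      by (simp add: kron_mult_nth scaleR_sum_right)
    finally show ?thesis .
  qed
  then show ?thesis by (simp add: vec_eq_iff)
qed

lemma kron_mult_mat_1:
  fixes x :: "'a::real_vector^'n"
  shows "kron_mult (mat 1) x = x"
proof -
  have "(\<Sum>j\<in>UNIV. (mat 1 :: real^'n^'n) $ i $ j *\<^sub>R x$j) = (\<Sum>j\<in>UNIV. if i = j then x$j else 0)" for i
    by (rule sum.cong) (auto simp: mat_def)
  then have "(\<Sum>j\<in>UNIV. (mat 1 :: real^'n^'n) $ i $ j *\<^sub>R x$j) = x $ i" for i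
    by simp
  then show ?thesis by (simp add: vec_eq_iff kron_mult_nth)
qed

lemma kron_mult_matpow: "kron_mult (matpow A t) x = (kron_mult A ^^ t) x"
  by (induction t arbitrary: x) (simp_all add: kron_mult_mat_1 kron_mult_matrix_mult)

lemma kron_mult_project:
  fixes x :: "'a::real_inner^'n"
  shows "(\<chi> i. kron_mult A x $ i \<bullet> b) = A *v (\<chi> i. x$i \<bullet> b)"
  by (simp add: vec_eq_iff kron_mult_nth matrix_vector_mult_def inner_sum_left)

lemma kron_eigenvector_project:
  fixes z :: "'a::euclidean_space^'n"
  assumes "kron_mult A z = l *\<^sub>R z" "z \<noteq> 0"
  shows "\<exists>u b. u \<noteq> 0 \<and> A *v u = l *\<^sub>R u \<and> b \<in> Basis \<and> u = (\<chi> i. z$i \<bullet> b)"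
proof -
  obtain i where i: "z $ i \<noteq> 0" using assms(2) by (auto simp: vec_eq_iff)
  then obtain b where b: "b \<in> Basis" "z$i \<bullet> b \<noteq> 0" using euclidean_all_zero_iff by blast
  define u where "u = (\<chi> i. z$i \<bullet> b)"
  have u0: "u \<noteq> 0" using b unfolding u_def by (auto simp: vec_eq_iff intro!: exI[of _ i])
  have "A *v u = (\<chi> i. kron_mult A z $ i \<bullet> b)" unfolding u_def by (simp add: kron_mult_project)
  also have "\<dots> = l *\<^sub>R u" unfolding assms(1) u_def by (simp add: vec_eq_iff)
  finally have e: "A *v u = l *\<^sub>R u" .
  show ?thesis
    by (rule exI[of _ u], rule exI[of _ b]) (intro conjI u0 e b(1) u_def)
qed

lemma kron_eigenvector_imp_mat_eigenvalue:
  fixes z :: "'a::euclidean_space^'n"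
  assumes "kron_mult A z = l *\<^sub>R z" "z \<noteq> 0"
  shows "mat_eigenvalue A l"
  using kron_eigenvector_project[OF assms] unfolding mat_eigenvalue_def by blast

lemma kron_mult_norm_eigenvalue_bound:
  fixes W :: "real^'n::finite^'n" and S :: "('a::euclidean_space^'n) set"
  assumes sym: "transpose W = W" and S: "subspace S" and inv: "\<And>x. x \<in> S \<Longrightarrow> kron_mult W x \<in> S"
    and x0: "x0 \<in> S" "x0 \<noteq> 0"
  shows "\<exists>z l. z \<in> S \<and> z \<noteq> 0 \<and> kron_mult W z = l *\<^sub>R z \<and> (\<forall>x\<in>S. norm (kron_mult W x) \<le> \<bar>l\<bar> * norm x)"
proof -
  let ?T = "\<lambda>x. kron_mult W (kron_mult W x)"
  have lin: "linear ?T" by (rule linearI) (simp_all add: kron_mult_add kron_mult_scaleR)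
  have sa: "x \<bullet> ?T y = ?T x \<bullet> y" for x y
    using inner_kron_mult_symmetric[OF sym] by metis
  obtain v where vS: "v \<in> S" and nv: "norm v = 1" and ev: "?T v = (v \<bullet> ?T v) *\<^sub>R v"
    and bd: "\<forall>x\<in>S. x \<bullet> ?T x \<le> (v \<bullet> ?T v) * (norm x)\<^sup>2"
    using self_adjoint_rayleigh_max[OF lin sa S _ x0] inv by blast
  define M where "M = v \<bullet> ?T v"
  have xT: "x \<bullet> ?T x = (norm (kron_mult W x))\<^sup>2" for x
    using inner_kron_mult_symmetric[OF sym, of x "kron_mult W x"] by (simp add: power2_norm_eq_inner)
  have M0: "M \<ge> 0" unfolding M_def xT by simp
  define r where "r = sqrt M"
  have rr: "r * r = M" "r \<ge> 0" unfolding r_def using M0 by auto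
  have bound: "\<forall>x\<in>S. norm (kron_mult W x) \<le> r * norm x"
  proof
    fix x assume xS: "x \<in> S"
    have "x \<bullet> ?T x \<le> M * (norm x)\<^sup>2" using bspec[OF bd xS] unfolding M_def .
    then have "(norm (kron_mult W x))\<^sup>2 \<le> M * (norm x)\<^sup>2" using xT[of x] by linarith
    then have "sqrt ((norm (kron_mult W x))\<^sup>2) \<le> sqrt (M * (norm x)\<^sup>2)" by (rule real_sqrt_le_mono)
    then show "norm (kron_mult W x) \<le> r * norm x" unfolding r_def by (simp add: real_sqrt_mult)
  qed
  define u where "u = kron_mult W v + r *\<^sub>R v"
  have uS: "u \<in> S" unfolding u_def using vS inv S by (simp add: subspace_add subspace_scale)
  have Tu: "kron_mult W u = r *\<^sub>R u"
  proof -
    have "kron_mult W u = ?T v + r *\<^sub>R kron_mult W v" unfolding u_def by (simp add: kron_mult_add kron_mult_scaleR)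
    also have "\<dots> = M *\<^sub>R v + r *\<^sub>R kron_mult W v" using ev unfolding M_def by simp
    also have "\<dots> = r *\<^sub>R u" unfolding u_def using rr by (simp add: algebra_simps flip: rr(1))
    finally show ?thesis .
  qed
  show ?thesis
  proof (cases "u = 0")
    case False
    then show ?thesis using uS Tu bound rr by (intro exI[of _ u] exI[of _ r]) auto
  next
    case True
    then have "kron_mult W v = (- r) *\<^sub>R v" unfolding u_def by (simp add: add_eq_0_iff)
    moreover have "v \<noteq> 0" using nv by auto
    ultimately show ?thesis using vS bound rr by (intro exI[of _ v] exI[of _ "-r"]) auto
  qed
qed

lemma exists_nonzero_vec: "\<exists>x::'a::euclidean_space^'n::finite. x \<noteq> 0"
proof -
  obtain b :: 'a where "b \<in> Basis" using nonempty_Basis by blast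
  then have "b \<noteq> 0" by (auto simp: nonzero_Basis)
  then show ?thesis by (intro exI[of _ "\<chi> i. b"]) (simp add: vec_eq_iff)
qed

lemma lambda_min_le_quadratic_form:
  fixes A :: "real^'n::finite^'n" and y :: "'a::euclidean_space^'n"
  assumes sym: "transpose A = A"
  shows "lambda_min A * (norm y)\<^sup>2 \<le> y \<bullet> kron_mult A y"
proof -
  let ?T = "\<lambda>x::'a^'n. - kron_mult A x"
  have lin: "linear ?T" by (rule linearI) (simp_all add: kron_mult_add kron_mult_scaleR)
  have sa: "x \<bullet> ?T z = ?T x \<bullet> z" for x z using inner_kron_mult_symmetric[OF sym, of x z] by simp
  obtain x0 :: "'a^'n" where "x0 \<noteq> 0" using exists_nonzero_vec by blast
  then have "\<exists>v \<in> UNIV. norm v = 1 \<and> ?T v = (v \<bullet> ?T v) *\<^sub>R v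
      \<and> (\<forall>x \<in> UNIV. x \<bullet> ?T x \<le> (v \<bullet> ?T v) * (norm x)\<^sup>2)"
    by (intro self_adjoint_rayleigh_max[OF lin sa subspace_UNIV]) simp_all
  then obtain v :: "'a^'n" where v: "norm v = 1" "?T v = (v \<bullet> ?T v) *\<^sub>R v"
    and max: "\<And>x. x \<bullet> ?T x \<le> (v \<bullet> ?T v) * (norm x)\<^sup>2"
    by blast
  define M where "M = v \<bullet> ?T v"
  have "kron_mult A v = (- M) *\<^sub>R v" using v(2) unfolding M_def by (simp add: minus_equation_iff)
  then have "mat_eigenvalue A (- M)"
    using v(1) by (intro kron_eigenvector_imp_mat_eigenvalue) auto
  then have "lambda_min A \<le> - M"
    unfolding lambda_min_def by (intro Min_le[OF finite_mat_eigenvalues[OF sym]]) simp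
  then have "lambda_min A * (norm y)\<^sup>2 \<le> (- M) * (norm y)\<^sup>2" by (intro mult_right_mono) auto
  also have "\<dots> \<le> y \<bullet> kron_mult A y" using max[of y] unfolding M_def[symmetric] by simp
  finally show ?thesis .
qed

definition zero_sum :: "('a::real_vector^'n::finite) set" where "zero_sum = {x. (\<Sum>i\<in>UNIV. x$i) = 0}"

lemma subspace_zero_sum: "subspace zero_sum"
  unfolding zero_sum_def subspace_def by (simp add: sum.distrib scaleR_sum_right[symmetric])

lemma sum_kron_mult:
  assumes col: "\<And>j. (\<Sum>i\<in>UNIV. A$i$j) = 1"
  shows "(\<Sum>i\<in>UNIV. kron_mult A x $ i) = (\<Sum>i\<in>UNIV. x$i)"
proof -
  have "(\<Sum>i\<in>UNIV. kron_mult A x $ i) = (\<Sum>j\<in>UNIV. \<Sum>i\<in>UNIV. A$i$j *\<^sub>R x$j)"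
    unfolding kron_mult_nth by (rule sum.swap)
  also have "\<dots> = (\<Sum>j\<in>UNIV. x$j)" by (simp add: scaleR_sum_left[symmetric] col)
  finally show ?thesis .
qed

lemma kron_mult_in_zero_sum:
  assumes "y \<in> zero_sum" and "\<And>j. (\<Sum>i\<in>UNIV. A$i$j) = 1"
  shows "kron_mult A y \<in> zero_sum"
  using assms sum_kron_mult[of A y] unfolding zero_sum_def by simp

lemma kron_mult_const:
  assumes row: "\<And>i. (\<Sum>j\<in>UNIV. A$i$j) = 1"
  shows "kron_mult A (\<chi> i. c) = (\<chi> i. c)"
  by (simp add: vec_eq_iff kron_mult_nth scaleR_sum_left[symmetric] row)

lemma symmetric_column_sum:
  assumes sym: "transpose W = W" and row: "\<forall>i. (\<Sum>j\<in>UNIV. W $ i $ j) = 1"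
  shows "(\<Sum>i\<in>UNIV. W$i$j) = 1"
proof -
  have "(\<Sum>i\<in>UNIV. W$i$j) = (\<Sum>i\<in>UNIV. W$j$i)" by (rule sum.cong) (auto simp: symmetric_entry[OF sym, of _ j])
  then show ?thesis using row by simp
qed

lemma norm_kron_mult_le:
  fixes W :: "real^'n::finite^'n" and x :: "'a::euclidean_space^'n"
  assumes sym: "transpose W = W"
    and eigs: "\<forall>l. mat_eigenvalue W l \<and> l \<noteq> 1 \<longrightarrow> -1 < l \<and> l < 1"
  shows "norm (kron_mult W x) \<le> norm x"
proof (cases "x = 0")
  case True then show ?thesis by (simp add: kron_mult_0)
next
  case False
  have "\<exists>(z :: 'a^'n) l. z \<in> UNIV \<and> z \<noteq> 0 \<and> kron_mult W z = l *\<^sub>R z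
      \<and> (\<forall>y \<in> UNIV. norm (kron_mult W y) \<le> \<bar>l\<bar> * norm (y :: 'a^'n))"
    by (rule kron_mult_norm_eigenvalue_bound[OF sym subspace_UNIV _ UNIV_I False]) simp
  then obtain z :: "'a^'n" and l where z: "z \<noteq> 0" "kron_mult W z = l *\<^sub>R z"
    and bound: "\<And>y :: 'a^'n. norm (kron_mult W y) \<le> \<bar>l\<bar> * norm y"
    by blast
  have "mat_eigenvalue W l" by (rule kron_eigenvector_imp_mat_eigenvalue[OF z(2,1)])
  then have "\<bar>l\<bar> \<le> 1" using eigs by (cases "l = 1") auto
  then have "\<bar>l\<bar> * norm x \<le> norm x" by (simp add: mult_left_le_one_le)
  then show ?thesis using bound[of x] by linarith
qed

lemma norm_kron_mult_zero_sum_le: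
  fixes W :: "real^'n::finite^'n" and x :: "'a::euclidean_space^'n"
  assumes sym: "transpose W = W" and row: "\<forall>i. (\<Sum>j\<in>UNIV. W $ i $ j) = 1"
    and simple1: "\<forall>v. W *v v = v \<longrightarrow> (\<exists>c. v = (\<chi> i. c))"
    and x: "x \<in> zero_sum"
  shows "norm (kron_mult W x) \<le> second_eig_mag W * norm x"
proof (cases "x = 0")
  case True then show ?thesis by (simp add: kron_mult_0)
next
  case False
  have inv: "kron_mult W y \<in> zero_sum" if "y \<in> zero_sum" for y :: "'a^'n"
    using that symmetric_column_sum[OF sym row] by (rule kron_mult_in_zero_sum)
  have "\<exists>(z :: 'a^'n) l. z \<in> zero_sum \<and> z \<noteq> 0 \<and> kron_mult W z = l *\<^sub>R z
      \<and> (\<forall>y \<in> zero_sum. norm (kron_mult W y) \<le> \<bar>l\<bar> * norm (y :: 'a^'n))"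
    by (rule kron_mult_norm_eigenvalue_bound[OF sym subspace_zero_sum inv x False])
  then obtain z :: "'a^'n" and l where z: "z \<in> zero_sum" "z \<noteq> 0" "kron_mult W z = l *\<^sub>R z"
    and bound: "\<forall>y \<in> zero_sum. norm (kron_mult W y) \<le> \<bar>l\<bar> * norm (y :: 'a^'n)"
    by blast
  obtain u b where u: "u \<noteq> 0" "W *v u = l *\<^sub>R u" "u = (\<chi> i. z$i \<bullet> b)"
    using kron_eigenvector_project[OF z(3,2)] by blast
  \<comment> \<open>the eigenvector u has zero sum, so it is not constant and l is not the eigenvalue 1\<close>
  have "(\<Sum>i\<in>UNIV. u$i) = (\<Sum>i\<in>UNIV. z$i) \<bullet> b" using u(3) by (simp add: inner_sum_left)
  then have u_sum: "(\<Sum>i\<in>UNIV. u$i) = 0" using z(1) unfolding zero_sum_def by simp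
  have "l \<noteq> 1"
  proof
    assume "l = 1"
    then obtain c where c: "u = (\<chi> i. c)" using simple1 u(2) by auto
    then have "c = 0" using u_sum by simp
    then show False using u(1) c by (simp add: vec_eq_iff)
  qed
  moreover have "mat_eigenvalue W l" unfolding mat_eigenvalue_def using u(1,2) by auto
  moreover have "finite {\<bar>l\<bar> | l. mat_eigenvalue W l \<and> l \<noteq> 1}"
    by (rule finite_subset[OF _ finite_imageI[OF finite_mat_eigenvalues[OF sym], of abs]]) auto
  ultimately have "\<bar>l\<bar> \<le> second_eig_mag W"
    unfolding second_eig_mag_def by (intro Max_ge) auto
  then have "\<bar>l\<bar> * norm x \<le> second_eig_mag W * norm x" by (simp add: mult_right_mono)
  then show ?thesis using bound x by auto
qed

lemma funpow_kron_mult_zero_sum: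
  fixes W :: "real^'n::finite^'n"
  assumes sym: "transpose W = W" and row: "\<forall>i. (\<Sum>j\<in>UNIV. W $ i $ j) = 1"
  shows "y \<in> zero_sum \<Longrightarrow> (kron_mult W ^^ t) (y::'a::real_vector^'n) \<in> zero_sum"
proof (induction t)
  case (Suc t)
  then show ?case using symmetric_column_sum[OF sym row] by (simp add: kron_mult_in_zero_sum)
qed simp

lemma norm_kron_mult_matpow_le:
  fixes W :: "real^'n::finite^'n" and y :: "'a::euclidean_space^'n"
  assumes sym: "transpose W = W"
    and eigs: "\<forall>l. mat_eigenvalue W l \<and> l \<noteq> 1 \<longrightarrow> -1 < l \<and> l < 1"
  shows "norm (kron_mult (matpow W t) y) \<le> norm y"
  unfolding kron_mult_matpow
proof (induction t)
  case (Suc t)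
  have "norm ((kron_mult W ^^ Suc t) y) \<le> norm ((kron_mult W ^^ t) y)" using norm_kron_mult_le[OF sym eigs] by simp
  then show ?case using Suc by linarith
qed simp

lemma norm_kron_mult_matpow_zero_sum_le:
  fixes W :: "real^'n::finite^'n" and y :: "'a::euclidean_space^'n"
  assumes sym: "transpose W = W" and row: "\<forall>i. (\<Sum>j\<in>UNIV. W $ i $ j) = 1"
    and simple1: "\<forall>v. W *v v = v \<longrightarrow> (\<exists>c. v = (\<chi> i. c))"
    and bpos: "0 \<le> second_eig_mag W" and y: "y \<in> zero_sum"
  shows "norm (kron_mult (matpow W t) y) \<le> second_eig_mag W ^ t * norm y"
  unfolding kron_mult_matpow
proof (induction t)
  case (Suc t)
  have "norm ((kron_mult W ^^ Suc t) y) \<le> second_eig_mag W * norm ((kron_mult W ^^ t) y)"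
    using norm_kron_mult_zero_sum_le[OF sym row simple1 funpow_kron_mult_zero_sum[OF sym row y]] by simp
  also have "\<dots> \<le> second_eig_mag W * (second_eig_mag W ^ t * norm y)"
    using Suc bpos by (intro mult_left_mono) auto
  finally show ?case by simp
qed simp

lemma sum_kron_mult_matpow:
  fixes W :: "real^'n::finite^'n"
  assumes sym: "transpose W = W" and row: "\<forall>i. (\<Sum>j\<in>UNIV. W $ i $ j) = 1"
  shows "(\<Sum>i\<in>UNIV. kron_mult (matpow W t) y $ i) = (\<Sum>i\<in>UNIV. (y::'a::real_vector^'n) $ i)"
  unfolding kron_mult_matpow
proof (induction t)
  case (Suc t)
  then show ?case using sum_kron_mult[of W "(kron_mult W ^^ t) y"] symmetric_column_sum[OF sym row] by simp
qed simp

lemma kron_mult_matpow_const: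
  fixes W :: "real^'n::finite^'n"
  assumes row: "\<forall>i. (\<Sum>j\<in>UNIV. W $ i $ j) = 1"
  shows "kron_mult (matpow W t) (\<chi> i. v) = (\<chi> i. (v::'a::real_vector))"
  unfolding kron_mult_matpow
proof (induction t)
  case (Suc t)
  then show ?case using kron_mult_const[of W v] row by simp
qed simp

section \<open>Averages and stacked gradients\<close>

lemma norm_vec_sq: "(norm (y::'a::real_inner^'n::finite))\<^sup>2 = (\<Sum>i\<in>UNIV. (norm (y$i))\<^sup>2)"
  by (simp add: power2_norm_eq_inner inner_vec_def)

definition vec_mean :: "('a::real_vector)^'n::finite \<Rightarrow> 'a" where
  "vec_mean y = (1 / real CARD('n)) *\<^sub>R (\<Sum>i\<in>UNIV. y$i)"

definition stack_grad :: "('n \<Rightarrow> 'a \<Rightarrow> 'a) \<Rightarrow> 'a^'n \<Rightarrow> 'a^'n" where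
  "stack_grad g y = (\<chi> i. g i (y$i))"

lemma vec_mean_diff: "vec_mean (x - y) = vec_mean x - vec_mean y"
  by (simp add: vec_mean_def sum_subtractf scaleR_diff_right)

lemma vec_mean_scaleR: "vec_mean (c *\<^sub>R y) = c *\<^sub>R vec_mean y"
  by (simp add: vec_mean_def scaleR_sum_right)

lemma sub_vec_mean_in_zero_sum: "y - (\<chi> i. vec_mean y) \<in> zero_sum"
  by (simp add: zero_sum_def vec_mean_def sum_subtractf sum_constant_scaleR)

lemma norm_sub_vec_mean_le:
  fixes y :: "'a::real_inner^'n::finite"
  shows "norm (y - (\<chi> i. vec_mean y)) \<le> norm y"
proof -
  let ?c = "(\<chi> i. vec_mean y) :: 'a^'n"
  have "(y - ?c) \<bullet> ?c = 0"
    using sub_vec_mean_in_zero_sum[of y]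
    by (simp add: zero_sum_def inner_vec_def inner_sum_left[symmetric])
  then have "(norm y)\<^sup>2 = (norm (y - ?c))\<^sup>2 + (norm ?c)\<^sup>2"
    using norm_add_Pythagorean[of "y - ?c" ?c] by (simp add: orthogonal_def)
  then have "(norm (y - ?c))\<^sup>2 \<le> (norm y)\<^sup>2" by simp
  then show ?thesis by (rule power2_le_imp_le) simp
qed

lemma norm_vec_mean_stack_grad_diff_le:
  fixes g :: "'n::finite \<Rightarrow> 'a::real_normed_vector \<Rightarrow> 'a"
  assumes lip: "\<And>i x y. norm (g i x - g i y) \<le> Li i * norm (x - y)"
  shows "norm (vec_mean (stack_grad g x) - vec_mean (stack_grad g y))
    \<le> (\<Sum>i\<in>UNIV. Li i * norm (x$i - y$i)) / real CARD('n)"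
proof -
  have "norm (vec_mean (stack_grad g x) - vec_mean (stack_grad g y))
      = norm (\<Sum>i\<in>UNIV. g i (x$i) - g i (y$i)) / real CARD('n)"
    by (simp add: vec_mean_def stack_grad_def sum_subtractf flip: scaleR_diff_right)
  also have "\<dots> \<le> (\<Sum>i\<in>UNIV. Li i * norm (x$i - y$i)) / real CARD('n)"
    by (intro divide_right_mono order_trans[OF norm_sum sum_mono] lip) simp
  finally show ?thesis .
qed

lemma norm_stack_grad_sq_le:
  fixes f :: "'n::finite \<Rightarrow> 'a::real_inner \<Rightarrow> real"
  assumes der: "\<And>i x. (f i has_derivative (\<lambda>z. g i x \<bullet> z)) (at x)"
    and lip: "\<And>i x z. norm (g i x - g i z) \<le> L * norm (x - z)"
    and L: "L > 0" and lower: "\<And>i x. m i \<le> f i x"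
  shows "(norm (stack_grad g y))\<^sup>2 \<le> 2 * L * (\<Sum>i\<in>UNIV. f i (y$i) - m i)"
proof -
  have "(norm (stack_grad g y))\<^sup>2 = (\<Sum>i\<in>UNIV. (norm (g i (y$i)))\<^sup>2)"
    by (simp add: stack_grad_def norm_vec_sq)
  also have "\<dots> \<le> (\<Sum>i\<in>UNIV. 2 * L * (f i (y$i) - m i))"
    by (intro sum_mono gradient_norm_sq_le_gap[OF der lip L lower])
  finally show ?thesis by (simp add: sum_distrib_left)
qed

section \<open>Analysis of DGD\<close>

text \<open>The gradient of this function at y is y - A y + alpha stack_grad g y, so a DGD step with
  mixing matrix A is a gradient step of unit length on it.\<close>

definition dgd_lyapunov :: "real^'n^'n \<Rightarrow> real \<Rightarrow> ('n \<Rightarrow> 'a \<Rightarrow> real) \<Rightarrow> ('a::real_inner)^'n::finite \<Rightarrow> real"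
  where "dgd_lyapunov A alpha f y = (y \<bullet> y - y \<bullet> kron_mult A y) / 2 + alpha * (\<Sum>i\<in>UNIV. f i (y$i))"

lemma dgd_lyapunov_descent:
  fixes A :: "real^'n::finite^'n" and y :: "'a::euclidean_space^'n"
  assumes sym: "transpose A = A"
    and der: "\<And>i x. (f i has_derivative (\<lambda>z. g i x \<bullet> z)) (at x)"
    and lip: "\<And>i x z. norm (g i x - g i z) \<le> L * norm (x - z)"
    and alpha: "alpha \<ge> 0" and step: "alpha * L \<le> 1 + lambda_min A"
  shows "dgd_lyapunov A alpha f (kron_mult A y - alpha *\<^sub>R stack_grad g y) \<le> dgd_lyapunov A alpha f y"
proof -
  define d where "d = y - kron_mult A y + alpha *\<^sub>R stack_grad g y"
  have next_eq: "kron_mult A y - alpha *\<^sub>R stack_grad g y = y - d" unfolding d_def by simp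
  have quad: "(y - d) \<bullet> (y - d) - (y - d) \<bullet> kron_mult A (y - d)
      = (y \<bullet> y - y \<bullet> kron_mult A y) - 2 * (d \<bullet> y - d \<bullet> kron_mult A y) + (d \<bullet> d - d \<bullet> kron_mult A d)"
    using inner_kron_mult_symmetric[OF sym, of y d]
    by (simp add: kron_mult_diff inner_diff_left inner_diff_right inner_commute)
  have "(\<Sum>i\<in>UNIV. f i ((y - d)$i))
      \<le> (\<Sum>i\<in>UNIV. f i (y$i) + g i (y$i) \<bullet> ((y - d)$i - y$i) + L/2 * (norm ((y - d)$i - y$i))\<^sup>2)"
    by (intro sum_mono lipschitz_gradient_upper_bound[OF der lip])
  also have "\<dots> = (\<Sum>i\<in>UNIV. f i (y$i)) - stack_grad g y \<bullet> d + L/2 * (d \<bullet> d)"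
    by (simp add: stack_grad_def inner_vec_def norm_vec_sq[symmetric] power2_norm_eq_inner
        sum.distrib sum_subtractf sum_distrib_left inner_diff_right)
  finally have smooth: "alpha * (\<Sum>i\<in>UNIV. f i ((y - d)$i))
      \<le> alpha * (\<Sum>i\<in>UNIV. f i (y$i)) - alpha * (stack_grad g y \<bullet> d) + alpha * L/2 * (d \<bullet> d)"
    using mult_left_mono alpha by (fastforce simp: algebra_simps)
  have cross: "d \<bullet> y - d \<bullet> kron_mult A y = d \<bullet> d - alpha * (stack_grad g y \<bullet> d)"
    by (subst (3) d_def) (simp add: inner_add_right inner_diff_right inner_commute)
  have "alpha * L * (d \<bullet> d) \<le> (1 + lambda_min A) * (d \<bullet> d)"
    using step by (intro mult_right_mono) auto
  moreover have "lambda_min A * (d \<bullet> d) \<le> d \<bullet> kron_mult A d"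
    using lambda_min_le_quadratic_form[OF sym, of d] by (simp add: power2_norm_eq_inner)
  ultimately show ?thesis
    unfolding dgd_lyapunov_def next_eq quad cross using smooth by (simp add: field_simps)
qed

lemma dgd_objective_le_initial:
  fixes A :: "real^'n::finite^'n" and X :: "nat \<Rightarrow> 'a::euclidean_space^'n"
  assumes sym: "transpose A = A" and nonexp: "\<And>y :: 'a^'n. norm (kron_mult A y) \<le> norm y"
    and der: "\<And>i x. (f i has_derivative (\<lambda>z. g i x \<bullet> z)) (at x)"
    and lip: "\<And>i x z. norm (g i x - g i z) \<le> L * norm (x - z)"
    and alpha: "alpha > 0" and step: "alpha * L \<le> 1 + lambda_min A"
    and X_0: "X 0 = 0" and X_Suc: "\<And>k. X (Suc k) = kron_mult A (X k) - alpha *\<^sub>R stack_grad g (X k)"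
  shows "(\<Sum>i\<in>UNIV. f i (X k $ i)) \<le> (\<Sum>i\<in>UNIV. f i 0)"
proof -
  have "y \<bullet> kron_mult A y \<le> y \<bullet> y" for y :: "'a^'n"
    using norm_cauchy_schwarz[of y "kron_mult A y"] mult_left_mono[OF nonexp, of "norm y" y]
    by (simp add: dot_square_norm power2_eq_square)
  then have "alpha * (\<Sum>i\<in>UNIV. f i (X k $ i)) \<le> dgd_lyapunov A alpha f (X k)"
    by (simp add: dgd_lyapunov_def)
  also have "\<dots> \<le> dgd_lyapunov A alpha f (X 0)"
  proof (induction k)
    case (Suc k)
    have "dgd_lyapunov A alpha f (X (Suc k)) \<le> dgd_lyapunov A alpha f (X k)"
      unfolding X_Suc using alpha by (intro dgd_lyapunov_descent[OF sym der lip _ step]) simp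
    with Suc show ?case by simp
  qed simp
  also have "\<dots> = alpha * (\<Sum>i\<in>UNIV. f i 0)"
    by (simp add: dgd_lyapunov_def X_0 kron_mult_0)
  finally show ?thesis using alpha by simp
qed

lemma consensus_error_le:
  fixes A :: "real^'n::finite^'n" and X G :: "nat \<Rightarrow> 'a::real_inner^'n"
  assumes mean: "\<And>y :: 'a^'n. vec_mean (kron_mult A y) = vec_mean y"
    and const: "\<And>v :: 'a. kron_mult A (\<chi> i. v) = (\<chi> i. v)"
    and contraction: "\<And>y :: 'a^'n. y \<in> zero_sum \<Longrightarrow> norm (kron_mult A y) \<le> b * norm y"
    and b: "0 \<le> b" "b < 1" and alpha: "alpha \<ge> 0" and G: "\<And>k. norm (G k) \<le> D"
    and X_0: "X 0 = 0" and X_Suc: "\<And>k. X (Suc k) = kron_mult A (X k) - alpha *\<^sub>R G k"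
  shows "norm (X k - (\<chi> i. vec_mean (X k))) \<le> alpha * D / (1 - b)"
proof (induction k)
  case 0
  have "D \<ge> 0" using G[of 0] norm_ge_zero order_trans by blast
  have "(\<chi> i. 0) = (0 :: 'a^'n)" by (simp add: vec_eq_iff)
  with \<open>D \<ge> 0\<close> show ?case using alpha b by (simp add: X_0 vec_mean_def)
next
  case (Suc k)
  define E where "E = X k - (\<chi> i. vec_mean (X k))"
  have "X (Suc k) - (\<chi> i. vec_mean (X (Suc k)))
      = kron_mult A E - alpha *\<^sub>R (G k - (\<chi> i. vec_mean (G k)))"
  proof -
    have "vec_mean (X (Suc k)) = vec_mean (X k) - alpha *\<^sub>R vec_mean (G k)"
      unfolding X_Suc by (simp add: vec_mean_diff vec_mean_scaleR mean)
    moreover have "kron_mult A E = kron_mult A (X k) - (\<chi> i. vec_mean (X k))"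
      unfolding E_def by (simp add: kron_mult_diff const)
    ultimately show ?thesis unfolding X_Suc by (simp add: vec_eq_iff algebra_simps)
  qed
  also have "norm \<dots> \<le> b * norm E + alpha * D"
  proof (rule order_trans[OF norm_triangle_ineq4 add_mono])
    show "norm (kron_mult A E) \<le> b * norm E"
      unfolding E_def by (rule contraction[OF sub_vec_mean_in_zero_sum])
    show "norm (alpha *\<^sub>R (G k - (\<chi> i. vec_mean (G k)))) \<le> alpha * D"
      using alpha order_trans[OF norm_sub_vec_mean_le G] by (simp add: mult_left_mono)
  qed
  also have "\<dots> \<le> b * (alpha * D / (1 - b)) + alpha * D"
    using mult_left_mono[OF Suc \<open>0 \<le> b\<close>] unfolding E_def by simp
  also have "\<dots> = alpha * D / (1 - b)"
    using b by (simp add: field_simps)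
  finally show ?case .
qed

locale dgd_problem =
  fixes W :: "real^'n::finite^'n" and t :: nat and alpha :: real
    and f :: "'n \<Rightarrow> 'a::euclidean_space \<Rightarrow> real" and g :: "'n \<Rightarrow> 'a \<Rightarrow> 'a"
    and Li :: "'n \<Rightarrow> real" and mu_h :: real and xstar :: 'a
  assumes W_sym: "transpose W = W"
    and W_stoch: "\<forall>i. (\<Sum>j\<in>UNIV. W $ i $ j) = 1"
    and W_simple1: "\<forall>v. W *v v = v \<longrightarrow> (\<exists>c. v = (\<chi> i. c))"
    and W_eigs: "\<forall>l. mat_eigenvalue W l \<and> l \<noteq> 1 \<longrightarrow> -1 < l \<and> l < 1"
    and beta_pos: "0 < second_eig_mag W" and beta_lt1: "second_eig_mag W < 1"
    and t_pos: "t \<ge> 1"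
    and f_grad: "\<And>i x. (f i has_derivative (\<lambda>y. g i x \<bullet> y)) (at x)"
    and f_lip: "\<And>i x y. norm (g i x - g i y) \<le> Li i * norm (x - y)"
    and f_min: "\<And>i. \<exists>z. \<forall>x. f i z \<le> f i x"
    and mu_pos: "mu_h > 0"
    and h_sc: "strongly_convex mu_h (\<lambda>x. \<Sum>i\<in>UNIV. f i x)"
    and xstar_min: "\<And>x. (\<Sum>i\<in>UNIV. f i xstar) \<le> (\<Sum>i\<in>UNIV. f i x)"
    and alpha_pos: "0 < alpha"
    and alpha_le1: "alpha \<le> (1 + lambda_min (matpow W t)) / Max (range Li)"
    and alpha_le2: "alpha \<le> 2 / (mu_h / CARD('n) + (\<Sum>i\<in>UNIV. Li i) / CARD('n))"
    and alpha_c2: "alpha * (2 * (mu_h / CARD('n)) * ((\<Sum>i\<in>UNIV. Li i) / CARD('n))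
                     / (mu_h / CARD('n) + (\<Sum>i\<in>UNIV. Li i) / CARD('n))) < 1"
begin

definition "L = Max (range Li)"
definition "mu = mu_h / CARD('n)"
definition "L_avg = (\<Sum>i\<in>UNIV. Li i) / CARD('n)"
definition "c2 = 2 * mu * L_avg / (mu + L_avg)"
definition "D = sqrt (2 * L * (\<Sum>i\<in>UNIV. f i 0 - (INF x. f i x)))"
definition "beta = second_eig_mag W"
definition "delta = c2 / (2 * (1 - alpha * c2))"
definition "c1 = sqrt (1 - alpha * c2 / 2)"
definition "c3 = sqrt (alpha ^ 3 * (alpha + 1 / delta)) * L * D"

definition X :: "nat \<Rightarrow> 'a^'n" where "X k = (\<chi> i. dgd W t alpha g k i)"

definition avg_grad :: "'a \<Rightarrow> 'a" where "avg_grad x = vec_mean (stack_grad g (\<chi> i. x))"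

lemma Li_nonneg: "Li i \<ge> 0"
proof -
  obtain b :: 'a where "b \<in> Basis" using nonempty_Basis by blast
  then have "norm (g i b - g i 0) \<le> Li i" using f_lip[of i b 0] by simp
  then show ?thesis using norm_ge_zero order_trans by blast
qed

lemma Li_le_L: "Li i \<le> L"
  unfolding L_def by (rule Max_ge) auto

lemma L_pos: "L > 0"
proof -
  have "L \<ge> 0" using Li_le_L Li_nonneg order_trans by blast
  moreover have "L \<noteq> 0" using alpha_le1 alpha_pos unfolding L_def by auto
  ultimately show ?thesis by simp
qed

lemma g_lipschitz: "norm (g i x - g i y) \<le> L * norm (x - y)"
  using f_lip[of i x y] mult_right_mono[OF Li_le_L[of i] norm_ge_zero[of "x - y"]] by linarith

lemma L_avg_pos: "L_avg > 0"
proof -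
  have "L \<in> range Li" unfolding L_def by (rule Max_in) auto
  then obtain i where "L = Li i" by auto
  moreover have "Li i \<le> (\<Sum>j\<in>UNIV. Li j)" by (rule member_le_sum) (auto intro: Li_nonneg)
  ultimately show ?thesis using L_pos unfolding L_avg_def by simp
qed

lemma mu_avg_pos: "mu > 0"
  using mu_pos by (simp add: mu_def)

lemma c2_pos: "c2 > 0"
  unfolding c2_def using L_avg_pos mu_avg_pos by simp

lemma alpha_c2_lt_1: "alpha * c2 < 1"
  using alpha_c2 unfolding c2_def mu_def L_avg_def .

lemma beta_pow_lt_1: "beta ^ t < 1"
  using beta_pos beta_lt1 t_pos unfolding beta_def by (simp add: power_less_one_iff)

lemma X_0: "X 0 = 0"
  by (simp add: X_def vec_eq_iff)

lemma X_Suc: "X (Suc k) = kron_mult (matpow W t) (X k) - alpha *\<^sub>R stack_grad g (X k)"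
  by (simp add: X_def kron_mult_def stack_grad_def vec_eq_iff)

lemma objective_le_initial: "(\<Sum>i\<in>UNIV. f i (X k $ i)) \<le> (\<Sum>i\<in>UNIV. f i 0)"
proof (rule dgd_objective_le_initial[OF _ _ f_grad g_lipschitz alpha_pos _ X_0 X_Suc])
  show "transpose (matpow W t) = matpow W t" by (rule transpose_matpow[OF W_sym])
  show "norm (kron_mult (matpow W t) y) \<le> norm y" for y :: "'a^'n"
    by (rule norm_kron_mult_matpow_le[OF W_sym W_eigs])
  show "alpha * L \<le> 1 + lambda_min (matpow W t)"
    using alpha_le1 L_pos unfolding L_def by (simp add: field_simps)
qed

lemma INF_f_le: "(INF x. f i x) \<le> f i y"
proof -
  obtain z where z: "\<forall>x. f i z \<le> f i x" using f_min by blast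
  then have "(INF x. f i x) = f i z" by (intro cInf_eq_minimum) auto
  with z show ?thesis by simp
qed

lemma stack_grad_X_le_D: "norm (stack_grad g (X k)) \<le> D"
proof -
  have "(norm (stack_grad g (X k)))\<^sup>2 \<le> 2 * L * (\<Sum>i\<in>UNIV. f i (X k $ i) - (INF x. f i x))"
    by (rule norm_stack_grad_sq_le[OF f_grad g_lipschitz L_pos INF_f_le])
  also have "\<dots> \<le> 2 * L * (\<Sum>i\<in>UNIV. f i 0 - (INF x. f i x))"
    using objective_le_initial[of k] L_pos by (simp add: sum_subtractf)
  finally show ?thesis unfolding D_def by (simp add: real_le_rsqrt)
qed

lemma consensus_error_X_le: "norm (X k - (\<chi> i. vec_mean (X k))) \<le> alpha * D / (1 - beta ^ t)"
proof (rule consensus_error_le[OF _ _ _ _ beta_pow_lt_1 _ stack_grad_X_le_D X_0 X_Suc])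
  show "vec_mean (kron_mult (matpow W t) y) = vec_mean y" for y :: "'a^'n"
    using sum_kron_mult_matpow[OF W_sym W_stoch] by (simp add: vec_mean_def)
  show "kron_mult (matpow W t) (\<chi> i. v) = (\<chi> i. v)" for v :: 'a
    by (rule kron_mult_matpow_const[OF W_stoch])
  show "norm (kron_mult (matpow W t) y) \<le> beta ^ t * norm y" if "y \<in> zero_sum" for y :: "'a^'n"
    unfolding beta_def using beta_pos
    by (intro norm_kron_mult_matpow_zero_sum_le[OF W_sym W_stoch W_simple1 _ that]) simp
  show "0 \<le> beta ^ t" using beta_pos by (simp add: beta_def)
qed (use alpha_pos in simp)

lemma avg_grad_eq: "avg_grad x = (1 / real CARD('n)) *\<^sub>R (\<Sum>i\<in>UNIV. g i x)"
  by (simp add: avg_grad_def vec_mean_def stack_grad_def)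

lemma avg_grad_contraction:
  "(norm (y - alpha *\<^sub>R avg_grad y - xstar))\<^sup>2 \<le> (1 - alpha * c2) * (norm (y - xstar))\<^sup>2"
proof -
  define F where "F x = (\<Sum>i\<in>UNIV. f i x) / real CARD('n)" for x
  have F_deriv: "(F has_derivative (\<lambda>y. avg_grad x \<bullet> y)) (at x)" for x
    unfolding F_def avg_grad_eq
    by (auto intro!: derivative_eq_intros f_grad simp: inner_sum_left)
  have "norm (avg_grad x - avg_grad y) \<le> L_avg * norm (x - y)" for x y
    using norm_vec_mean_stack_grad_diff_le[OF f_lip, where x="\<chi> i. x" and y="\<chi> i. y"]
    by (simp add: avg_grad_def L_avg_def sum_distrib_right)
  moreover have "convex_on UNIV (\<lambda>x. F x - mu/2 * (norm x)\<^sup>2)"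
  proof -
    have "convex_on UNIV (\<lambda>x. (1 / real CARD('n)) * ((\<Sum>i\<in>UNIV. f i x) - mu_h/2 * (norm x)\<^sup>2))"
      using h_sc unfolding strongly_convex_def by (intro convex_on_cmul) auto
    then show ?thesis unfolding F_def mu_def by (simp add: field_simps)
  qed
  moreover have "avg_grad xstar = 0"
    by (rule gradient_eq_0_at_minimum[OF F_deriv]) (simp add: F_def xstar_min divide_right_mono)
  moreover have "alpha \<le> 2 / (mu + L_avg)"
    using alpha_le2 unfolding mu_def L_avg_def .
  ultimately show ?thesis unfolding c2_def
    using gradient_step_contraction[OF F_deriv] mu_avg_pos L_avg_pos alpha_pos by blast
qed

lemma mean_error_le:
  "norm (vec_mean (X k) - xstar) \<le> c1 ^ k * norm xstar + c3 / (sqrt (1 - c1\<^sup>2) * (1 - beta ^ t))"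
proof -
  define B where "B = alpha * D / (1 - beta ^ t)"
  define e where "e k = vec_mean (stack_grad g (X k)) - avg_grad (vec_mean (X k))" for k
  have e_le: "norm (e k) \<le> L * norm (X k - (\<chi> i. vec_mean (X k)))" for k
  proof -
    let ?E = "X k - (\<chi> i. vec_mean (X k))"
    have "norm (e k) \<le> (\<Sum>i\<in>UNIV. Li i * norm (?E $ i)) / real CARD('n)"
      unfolding e_def avg_grad_def
      using norm_vec_mean_stack_grad_diff_le[OF f_lip, where x="X k" and y="\<chi> i. vec_mean (X k)"]
      by simp
    also have "\<dots> \<le> (\<Sum>i\<in>(UNIV::'n set). L * norm ?E) / real CARD('n)"
    proof (intro divide_right_mono sum_mono)
      show "Li i * norm (?E $ i) \<le> L * norm ?E" for i
        using Li_le_L[of i] Li_nonneg[of i] L_pos Finite_Cartesian_Product.norm_nth_le[of ?E i]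
        by (intro mult_mono) auto
    qed simp
    finally show ?thesis by simp
  qed
  have err: "norm (e k) \<le> L * B" for k
    using order_trans[OF e_le mult_left_mono[OF consensus_error_X_le]] L_pos unfolding B_def by simp
  have step: "vec_mean (X (Suc k)) = vec_mean (X k) - alpha *\<^sub>R (avg_grad (vec_mean (X k)) + e k)" for k
    using sum_kron_mult_matpow[OF W_sym W_stoch]
    by (simp add: X_Suc e_def vec_mean_diff vec_mean_scaleR) (simp add: vec_mean_def)
  from inexact_gradient_descent_bound[where x="\<lambda>k. vec_mean (X k)", OF avg_grad_contraction alpha_pos c2_pos alpha_c2_lt_1 step err]
  have "norm (vec_mean (X k) - xstar)
      \<le> c1 ^ k * norm xstar + sqrt (alpha * (alpha + 1 / delta)) * (L * B) / sqrt (1 - c1\<^sup>2)"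
    by (simp add: X_0 vec_mean_def delta_def c1_def)
  also have "sqrt (alpha * (alpha + 1 / delta)) * (L * B) = c3 / (1 - beta ^ t)"
  proof -
    have "sqrt (alpha ^ 3 * (alpha + 1 / delta)) = alpha * sqrt (alpha * (alpha + 1 / delta))"
      using alpha_pos by (simp add: power3_eq_cube real_sqrt_mult)
    then show ?thesis unfolding c3_def B_def by simp
  qed
  finally show ?thesis by (simp only: divide_divide_eq_left')
qed

theorem dgd_error_bound:
  "norm (dgd W t alpha g k i - xstar)
    \<le> c1 ^ k * norm xstar + c3 / (sqrt (1 - c1\<^sup>2) * (1 - beta ^ t)) + alpha * D / (1 - beta ^ t)"
proof -
  have "norm (dgd W t alpha g k i - vec_mean (X k)) \<le> alpha * D / (1 - beta ^ t)"
    using Finite_Cartesian_Product.norm_nth_le[of "X k - (\<chi> i. vec_mean (X k))" i]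
      consensus_error_X_le[of k]
    by (simp add: X_def)
  from norm_diff_triangle_le[OF this mean_error_le[of k]] show ?thesis by linarith
qed

end

theorem corollary1:
  fixes W :: "real^'n::finite^'n"
    and f :: "'n \<Rightarrow> 'a::euclidean_space \<Rightarrow> real"
    and g :: "'n \<Rightarrow> 'a \<Rightarrow> 'a"
    and Li :: "'n \<Rightarrow> real"
    and t :: nat and alpha mu_h :: real and xstar :: 'a
  assumes W_sym: "transpose W = W"
    and W_nonneg: "\<forall>i j. W $ i $ j \<ge> 0"
    and W_stoch: "\<forall>i. (\<Sum>j\<in>UNIV. W $ i $ j) = 1"
    and W_diag: "\<forall>i. W $ i $ i > 0"
    and W_conn: "\<forall>i j. (i, j) \<in> {(a, b). W $ a $ b > 0}\<^sup>*"
    and W_simple1: "\<forall>v. W *v v = v \<longrightarrow> (\<exists>c. v = (\<chi> i. c))"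
    and W_eigs: "\<forall>l. mat_eigenvalue W l \<and> l \<noteq> 1 \<longrightarrow> -1 < l \<and> l < 1"
    and beta_pos: "0 < second_eig_mag W" and beta_lt1: "second_eig_mag W < 1"
    and t_pos: "t \<ge> 1"
    and f_conv: "\<forall>i. convex_on UNIV (f i)"
    and f_grad: "\<forall>i x. (f i has_derivative (\<lambda>y. g i x \<bullet> y)) (at x)"
    and f_lip: "\<forall>i x y. norm (g i x - g i y) \<le> Li i * norm (x - y)"
    and f_min: "\<forall>i. \<exists>z. \<forall>x. f i z \<le> f i x"
    and mu_pos: "mu_h > 0"
    and h_sc: "strongly_convex mu_h (\<lambda>x. \<Sum>i\<in>UNIV. f i x)"
    and xstar_min: "\<forall>x. (\<Sum>i\<in>UNIV. f i xstar) \<le> (\<Sum>i\<in>UNIV. f i x)"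
    and alpha_pos: "0 < alpha"
    and alpha_le1: "alpha \<le> (1 + lambda_min (matpow W t)) / Max (range Li)"
    and alpha_le2: "alpha \<le> 2 / (mu_h / CARD('n) + (\<Sum>i\<in>UNIV. Li i) / CARD('n))"
    and alpha_c2: "alpha * (2 * (mu_h / CARD('n)) * ((\<Sum>i\<in>UNIV. Li i) / CARD('n))
                     / (mu_h / CARD('n) + (\<Sum>i\<in>UNIV. Li i) / CARD('n))) < 1"
  shows "\<forall>k i.
    (let L = Max (range Li);
         mu = mu_h / CARD('n);
         Lf = (\<Sum>i\<in>UNIV. Li i) / CARD('n);
         c2 = 2 * mu * Lf / (mu + Lf);
         D = sqrt (2 * L * (\<Sum>i\<in>UNIV. f i 0 - (INF x. f i x)));
         beta = second_eig_mag W;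
         delta = c2 / (2 * (1 - alpha * c2));
         c1 = sqrt (1 - alpha * c2 / 2);
         c3 = sqrt (alpha ^ 3 * (alpha + 1 / delta)) * L * D
     in norm (dgd W t alpha g k i - xstar)
          \<le> c1 ^ k * norm xstar + c3 / (sqrt (1 - c1\<^sup>2) * (1 - beta ^ t))
             + alpha * D / (1 - beta ^ t))"
proof -
  interpret dgd_problem W t alpha f g Li mu_h xstar
    using assms by unfold_locales auto
  show ?thesis
    using dgd_error_bound unfolding Let_def L_def mu_def L_avg_def c2_def D_def beta_def delta_def c1_def c3_def
    by blast
qed

end
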